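(* Let $E$ be an arbitrary directed graph. For an admissible pair $(H,S)$ of $E$ let $(H,S)^\bot=(H^\bot,S^\bot)$ with $H^\bot=E^0-R(H)$ and $S^\bot=B_{H^\bot}-S$, and write $(H^{\bot\bot},S^{\bot\bot})=((H,S)^\bot)^\bot$, $(H^{\bot\bot\bot},S^{\bot\bot\bot})=(((H,S)^\bot)^\bot)^\bot$. Then the operator $\bot$ is decreasing: $(H,S)\le(G,T)$ implies $(H^\bot,S^\bot)\ge(G^\bot,T^\bot)$ for any admissible pairs $(H,S),(G,T)$. Moreover, for all admissible pairs $(H,S),(G,T)$: (1) $(H,S)\le(H^{\bot\bot},S^{\bot\bot})$; (2) $(H,S)\le(G,T)$ implies $(H^{\bot\bot},S^{\bot\bot})\le(G^{\bot\bot},T^{\bot\bot})$; (3) $(H^{\bot\bot\bot},S^{\bot\bot\bot})=(H^\bot,S^\bot)$.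
   Context: Write $u\ge v$ if there is a path (possibly of length 0) from $u$ to $v$; $R(V)=\{u\in E^0\mid u\ge v$ for some $v\in V\}$. $H\subseteq E^0$ is hereditary if $\mathbf{r}(p)\in H$ for every path $p$ with $\mathbf{s}(p)\in H$; saturated if every regular vertex $v$ (emitting a nonzero finite number of edges) with $\mathbf{r}(\mathbf{s}^{-1}(v))\subseteq H$ is in $H$. For hereditary saturated $H$, $B_H=\{v\in E^0-H\mid v$ emits infinitely many edges and $\mathbf{s}^{-1}(v)\cap\mathbf{r}^{-1}(E^0-H)$ is nonempty and finite$\}$. An admissible pair is $(H,S)$ with $H$ hereditary and saturated and $S\subseteq B_H$. Admissible pairs are partially ordered by $(H,S)\le(G,T)$ iff $H\subseteq G$ and $S\subseteq G\cup T$. For $H$ hereditary saturated, $E^0-R(H)$ is hereditary saturated, so $(H^\bot,S^\bot)$ is admissible. *)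

theory Defs
  imports Main
begin

record ('v, 'e) dgraph =
  verts :: "'v set"
  edges :: "'e set"
  src   :: "'e \<Rightarrow> 'v"
  rng   :: "'e \<Rightarrow> 'v"

definition wf_dgraph :: "('v, 'e) dgraph \<Rightarrow> bool" where
  "wf_dgraph E \<longleftrightarrow> (\<forall>e \<in> edges E. src E e \<in> verts E \<and> rng E e \<in> verts E)"

fun is_path_from :: "('v, 'e) dgraph \<Rightarrow> 'v \<Rightarrow> 'e list \<Rightarrow> 'v \<Rightarrow> bool" where
  "is_path_from E u [] v \<longleftrightarrow> u \<in> verts E \<and> u = v"
| "is_path_from E u (e # es) v \<longleftrightarrow> e \<in> edges E \<and> src E e = u \<and> is_path_from E (rng E e) es v"

definition geq :: "('v, 'e) dgraph \<Rightarrow> 'v \<Rightarrow> 'v \<Rightarrow> bool" where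
  "geq E u v \<longleftrightarrow> (\<exists>p. is_path_from E u p v)"

definition Rset :: "('v, 'e) dgraph \<Rightarrow> 'v set \<Rightarrow> 'v set" where
  "Rset E V = {u \<in> verts E. \<exists>v \<in> V. geq E u v}"

definition hereditary :: "('v, 'e) dgraph \<Rightarrow> 'v set \<Rightarrow> bool" where
  "hereditary E H \<longleftrightarrow> H \<subseteq> verts E \<and> (\<forall>u p v. u \<in> H \<and> is_path_from E u p v \<longrightarrow> v \<in> H)"

definition emits :: "('v, 'e) dgraph \<Rightarrow> 'v \<Rightarrow> 'e set" where
  "emits E v = {e \<in> edges E. src E e = v}"

definition regular :: "('v, 'e) dgraph \<Rightarrow> 'v \<Rightarrow> bool" where
  "regular E v \<longleftrightarrow> v \<in> verts E \<and> emits E v \<noteq> {} \<and> finite (emits E v)"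

definition saturated :: "('v, 'e) dgraph \<Rightarrow> 'v set \<Rightarrow> bool" where
  "saturated E H \<longleftrightarrow> (\<forall>v. regular E v \<and> rng E ` emits E v \<subseteq> H \<longrightarrow> v \<in> H)"

definition breaking :: "('v, 'e) dgraph \<Rightarrow> 'v set \<Rightarrow> 'v set" where
  "breaking E H = {v \<in> verts E - H. infinite (emits E v) \<and>
      {e \<in> emits E v. rng E e \<in> verts E - H} \<noteq> {} \<and>
      finite {e \<in> emits E v. rng E e \<in> verts E - H}}"

definition admissible :: "('v, 'e) dgraph \<Rightarrow> 'v set \<times> 'v set \<Rightarrow> bool" where
  "admissible E P \<longleftrightarrow> hereditary E (fst P) \<and> saturated E (fst P) \<and> snd P \<subseteq> breaking E (fst P)"

definition adm_le :: "'v set \<times> 'v set \<Rightarrow> 'v set \<times> 'v set \<Rightarrow> bool" where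
  "adm_le P Q \<longleftrightarrow> fst P \<subseteq> fst Q \<and> snd P \<subseteq> fst Q \<union> snd Q"

definition perp :: "('v, 'e) dgraph \<Rightarrow> 'v set \<times> 'v set \<Rightarrow> 'v set \<times> 'v set" where
  "perp E P = (let Hp = verts E - Rset E (fst P) in (Hp, breaking E Hp - snd P))"

end

theory Submission
  imports Defs
begin

text \<open>
  A vertex of a hereditary set \<open>G\<close> sends all its edges into \<open>R(G)\<close>, so it never breaks
  \<open>E\<^sup>0 - R(G)\<close>; and a vertex breaking \<open>E\<^sup>0 - R(G)\<close> that lies in \<open>R(H) - H\<close>, with
  \<open>H \<subseteq> G\<close>, also breaks \<open>E\<^sup>0 - R(H)\<close>, its edges into \<open>R(H)\<close> being a nonempty part of its
  finitely many edges into \<open>R(G)\<close>. This makes \<open>\<bottom>\<close> antitone. For (1): by heredity \<open>H\<close>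
  misses \<open>R(H\<^sup>\<bottom>)\<close>, so a breaking vertex of \<open>H\<close> lying in \<open>R(H\<^sup>\<bottom>)\<close> has its edges into
  \<open>R(H\<^sup>\<bottom>)\<close> among its finitely many edges leaving \<open>H\<close>. Then (3) follows formally from (1)
  and antitonicity, as \<open>\<le>\<close> is antisymmetric on pairs \<open>(H, S)\<close> with \<open>S \<inter> H = {}\<close>.
\<close>

lemma is_path_from_end_in_verts: "is_path_from E u p v \<Longrightarrow> v \<in> verts E"
  by (induction p arbitrary: u) auto

lemma is_path_from_append:
  "is_path_from E u p w \<Longrightarrow> is_path_from E w q v \<Longrightarrow> is_path_from E u (p @ q) v"
  by (induction p arbitrary: u) auto

lemma rng_in_verts: "wf_dgraph E \<Longrightarrow> e \<in> edges E \<Longrightarrow> rng E e \<in> verts E"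
  unfolding wf_dgraph_def by blast

lemma Rset_subset_verts: "Rset E X \<subseteq> verts E"
  unfolding Rset_def by auto

lemma Rset_mono: "X \<subseteq> Y \<Longrightarrow> Rset E X \<subseteq> Rset E Y"
  unfolding Rset_def by auto

lemma mem_Rset_self: "v \<in> verts E \<Longrightarrow> v \<in> X \<Longrightarrow> v \<in> Rset E X"
  unfolding Rset_def geq_def by (auto intro!: bexI[of _ v] exI[of _ "[]"])

lemma subset_Rset: "X \<subseteq> verts E \<Longrightarrow> X \<subseteq> Rset E X"
  by (auto intro: mem_Rset_self)

lemma src_in_Rset:
  assumes "wf_dgraph E" "e \<in> edges E" "rng E e \<in> Rset E X"
  shows "src E e \<in> Rset E X"
proof -
  obtain x p where "x \<in> X" "is_path_from E (rng E e) p x"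
    using assms(3) unfolding Rset_def geq_def by blast
  then have "is_path_from E (src E e) (e # p) x" using assms(2) by simp
  then show ?thesis using \<open>x \<in> X\<close> assms(1,2) unfolding Rset_def geq_def wf_dgraph_def by blast
qed

lemma Rset_diff_emits_into_Rset:
  assumes "wf_dgraph E" "u \<in> Rset E X" "u \<notin> X"
  shows "\<exists>e \<in> emits E u. rng E e \<in> Rset E X"
proof -
  obtain x p where x: "x \<in> X" "is_path_from E u p x"
    using assms(2) unfolding Rset_def geq_def by blast
  with assms(3) obtain e q where "p = e # q" by (cases p) auto
  with x have e: "e \<in> emits E u" "is_path_from E (rng E e) q x" unfolding emits_def by auto
  with assms(1) have "rng E e \<in> verts E" unfolding emits_def by (simp add: rng_in_verts)
  with e x have "rng E e \<in> Rset E X" unfolding Rset_def geq_def by blast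
  with e show ?thesis by blast
qed

lemma hereditary_edge:
  assumes "wf_dgraph E" "hereditary E H" "e \<in> edges E" "src E e \<in> H"
  shows "rng E e \<in> H"
proof -
  have "is_path_from E (src E e) [e] (rng E e)" using assms(1,3) by (simp add: rng_in_verts)
  then show ?thesis using assms(2,4) unfolding hereditary_def by blast
qed

lemma hereditary_compl_Rset: "hereditary E (verts E - Rset E X)"
  unfolding hereditary_def
proof (intro conjI allI impI)
  fix u p v assume path: "u \<in> verts E - Rset E X \<and> is_path_from E u p v"
  show "v \<in> verts E - Rset E X"
  proof (rule ccontr)
    assume "v \<notin> verts E - Rset E X"
    with path have "v \<in> Rset E X" by (blast dest: is_path_from_end_in_verts)
    then obtain w q where "w \<in> X" "is_path_from E v q w" unfolding Rset_def geq_def by blast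
    with path have "is_path_from E u (p @ q) w" by (blast intro: is_path_from_append)
    with path \<open>w \<in> X\<close> show False unfolding Rset_def geq_def by blast
  qed
qed blast

lemma hereditary_disjoint_Rset_perp:
  assumes "hereditary E H"
  shows "H \<inter> Rset E (verts E - Rset E H) = {}"
proof (rule ccontr)
  assume "H \<inter> Rset E (verts E - Rset E H) \<noteq> {}"
  then obtain u w p where "u \<in> H" "w \<in> verts E - Rset E H" "is_path_from E u p w"
    unfolding Rset_def geq_def by blast
  with assms have "w \<in> H" unfolding hereditary_def by blast
  with assms \<open>w \<in> verts E - Rset E H\<close> show False
    using subset_Rset unfolding hereditary_def by blast
qed

lemma mem_breaking_compl_Rset_iff:
  "v \<in> breaking E (verts E - Rset E X) \<longleftrightarrow>
     v \<in> Rset E X \<and> infinite (emits E v) \<and>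
     {e \<in> emits E v. rng E e \<in> Rset E X} \<noteq> {} \<and> finite {e \<in> emits E v. rng E e \<in> Rset E X}"
  unfolding breaking_def Diff_Diff_Int Int_absorb1[OF Rset_subset_verts] by auto

lemma breaking_compl_Rset_disjoint:
  assumes "wf_dgraph E" "hereditary E G"
  shows "G \<inter> breaking E (verts E - Rset E G) = {}"
proof -
  have "v \<notin> breaking E (verts E - Rset E G)" if "v \<in> G" for v
  proof
    assume "v \<in> breaking E (verts E - Rset E G)"
    then have "infinite (emits E v)" "finite {e \<in> emits E v. rng E e \<in> Rset E G}"
      unfolding mem_breaking_compl_Rset_iff by auto
    moreover have "emits E v \<subseteq> {e \<in> emits E v. rng E e \<in> Rset E G}"
      using that assms subset_Rset[of G E] hereditary_edge[OF assms]
      unfolding emits_def hereditary_def by blast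
    ultimately show False using finite_subset by blast
  qed
  then show ?thesis by blast
qed

lemma breaking_compl_Rset_antimono:
  assumes "wf_dgraph E" "X \<subseteq> Y" "v \<in> breaking E (verts E - Rset E Y)" "v \<in> Rset E X" "v \<notin> X"
  shows "v \<in> breaking E (verts E - Rset E X)"
proof -
  have "{e \<in> emits E v. rng E e \<in> Rset E X} \<subseteq> {e \<in> emits E v. rng E e \<in> Rset E Y}"
    using Rset_mono[OF assms(2)] by blast
  with assms show ?thesis
    unfolding mem_breaking_compl_Rset_iff
    by (blast dest: finite_subset Rset_diff_emits_into_Rset[OF assms(1)])
qed

lemma breaking_subset_Rset:
  assumes "wf_dgraph E"
  shows "breaking E H \<subseteq> Rset E H"
proof
  fix v assume v: "v \<in> breaking E H"
  then have "infinite (emits E v - {e \<in> emits E v. rng E e \<in> verts E - H})"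
    unfolding breaking_def by (auto intro: Diff_infinite_finite)
  then obtain e where e: "e \<in> emits E v" "rng E e \<notin> verts E - H"
    using infinite_imp_nonempty by blast
  then have "rng E e \<in> H" "rng E e \<in> verts E"
    using assms unfolding emits_def by (auto dest: rng_in_verts)
  then have "rng E e \<in> Rset E H" by (simp add: mem_Rset_self)
  with e assms show "v \<in> Rset E H" unfolding emits_def by (auto dest: src_in_Rset)
qed

lemma mem_breaking_perp_perp:
  assumes "wf_dgraph E" "hereditary E H" "v \<in> breaking E H"
    and "v \<in> Rset E (verts E - Rset E H)"
  shows "v \<in> breaking E (verts E - Rset E (verts E - Rset E H))"
proof -
  let ?Hp = "verts E - Rset E H"
  have inf: "infinite (emits E v)" and fin: "finite {e \<in> emits E v. rng E e \<in> verts E - H}"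
    using assms(3) unfolding breaking_def by auto
  have "v \<notin> ?Hp" using breaking_subset_Rset[OF assms(1)] assms(3) by blast
  then have "{e \<in> emits E v. rng E e \<in> Rset E ?Hp} \<noteq> {}"
    using Rset_diff_emits_into_Rset[OF assms(1,4)] by blast
  moreover have "{e \<in> emits E v. rng E e \<in> Rset E ?Hp} \<subseteq> {e \<in> emits E v. rng E e \<in> verts E - H}"
    using hereditary_disjoint_Rset_perp[OF assms(2)] Rset_subset_verts[of E ?Hp] by blast
  then have "finite {e \<in> emits E v. rng E e \<in> Rset E ?Hp}" using fin by (rule finite_subset)
  ultimately show ?thesis
    using assms(4) inf unfolding mem_breaking_compl_Rset_iff by blast
qed

lemma perp_eq: "perp E (H, S) = (verts E - Rset E H, breaking E (verts E - Rset E H) - S)"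
  unfolding perp_def Let_def by simp

lemma perp_antimono:
  assumes "wf_dgraph E" "hereditary E (fst Q)" "adm_le P Q"
  shows "adm_le (perp E Q) (perp E P)"
proof -
  obtain H S G T where PQ: "P = (H, S)" "Q = (G, T)" by fastforce
  with assms have HG: "H \<subseteq> G" and SGT: "S \<subseteq> G \<union> T" and hG: "hereditary E G"
    unfolding adm_le_def by auto
  have "v \<in> (verts E - Rset E H) \<union> (breaking E (verts E - Rset E H) - S)"
    if v: "v \<in> breaking E (verts E - Rset E G)" "v \<notin> T" for v
  proof (cases "v \<in> Rset E H")
    case True
    have "v \<notin> G" using breaking_compl_Rset_disjoint[OF assms(1) hG] v by blast
    with True v HG SGT show ?thesis using breaking_compl_Rset_antimono[OF assms(1) HG] by blast
  next
    case False
    with v show ?thesis unfolding breaking_def by blast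
  qed
  with Rset_mono[OF HG] show ?thesis unfolding PQ adm_le_def perp_eq by auto
qed

lemma le_perp_perp:
  assumes "wf_dgraph E" "hereditary E (fst P)" "snd P \<subseteq> breaking E (fst P)"
  shows "adm_le P (perp E (perp E P))"
proof -
  obtain H S where P: "P = (H, S)" by fastforce
  with assms have hH: "hereditary E H" and SB: "S \<subseteq> breaking E H" by auto
  have "H \<subseteq> verts E - Rset E (verts E - Rset E H)"
    using hereditary_disjoint_Rset_perp[OF hH] hH unfolding hereditary_def by blast
  moreover have "v \<in> breaking E (verts E - Rset E (verts E - Rset E H))"
    if "v \<in> S" "v \<notin> verts E - Rset E (verts E - Rset E H)" for v
    using that SB mem_breaking_perp_perp[OF assms(1) hH]
    unfolding breaking_def by blast
  ultimately show ?thesis unfolding P adm_le_def perp_eq by auto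
qed

lemma hereditary_fst_perp: "hereditary E (fst (perp E P))"
  unfolding perp_def Let_def using hereditary_compl_Rset by simp

lemma snd_perp_subset_breaking: "snd (perp E P) \<subseteq> breaking E (fst (perp E P))"
  unfolding perp_def Let_def by auto

lemma snd_perp_disjoint_fst: "snd (perp E P) \<inter> fst (perp E P) = {}"
  using snd_perp_subset_breaking[of E P] unfolding breaking_def by blast

lemma adm_le_antisym:
  assumes "adm_le P Q" "adm_le Q P" "snd P \<inter> fst P = {}" "snd Q \<inter> fst Q = {}"
  shows "P = Q"
  using assms unfolding adm_le_def by (auto simp: prod_eq_iff)

theorem proposition3p7:
  fixes E :: "('v, 'e) dgraph" and H S G T :: "'v set"
  assumes "wf_dgraph E"
    and "admissible E (H, S)" and "admissible E (G, T)"
  shows "(adm_le (H, S) (G, T) \<longrightarrow> adm_le (perp E (G, T)) (perp E (H, S)))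
       \<and> adm_le (H, S) (perp E (perp E (H, S)))
       \<and> (adm_le (H, S) (G, T) \<longrightarrow> adm_le (perp E (perp E (H, S))) (perp E (perp E (G, T))))
       \<and> perp E (perp E (perp E (H, S))) = perp E (H, S)"
proof -
  note wf = \<open>wf_dgraph E\<close>
  have antimono: "adm_le (H, S) (G, T) \<longrightarrow> adm_le (perp E (G, T)) (perp E (H, S))"
    using assms(3) perp_antimono[OF wf] unfolding admissible_def by simp
  have extensive: "adm_le (H, S) (perp E (perp E (H, S)))"
    using assms(2) le_perp_perp[OF wf] unfolding admissible_def by simp
  have mono: "adm_le (H, S) (G, T) \<longrightarrow> adm_le (perp E (perp E (H, S))) (perp E (perp E (G, T)))"
    using antimono perp_antimono[OF wf hereditary_fst_perp] by blast
  let ?P = "perp E (H, S)"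
  have "perp E (perp E ?P) = ?P"
  proof (rule adm_le_antisym)
    show "adm_le (perp E (perp E ?P)) ?P"
      using perp_antimono[OF wf hereditary_fst_perp extensive] .
    show "adm_le ?P (perp E (perp E ?P))"
      using le_perp_perp[OF wf hereditary_fst_perp snd_perp_subset_breaking] .
  qed (rule snd_perp_disjoint_fst)+
  with antimono extensive mono show ?thesis by blast
qed

end
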